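(* Let $k$ be a difference field of characteristic $0$ and $R=k\{y_1,\ldots,y_n\}$. If $\mathbf{u},\mathbf{v}\in\mathbb{N}[x]^n$ satisfy $\mathbf{u}\preceq\mathbf{v}$, then $\mathbf{y}^{\mathbf{v}}\in\langle\mathbf{y}^{\mathbf{u}}\rangle$.
   Context: A difference field is a field $k$ with a ring endomorphism $\sigma$; $R=k\{y_1,\ldots,y_n\}$ is the polynomial ring over $k$ in the variables $\sigma^j(y_i)$, with $\sigma$ extended naturally. For $p=\sum_ic_ix^i\in\mathbb{N}[x]$ and $a\in R$, $a^p=\prod_i(\sigma^i(a))^{c_i}$; $\mathbf{y}^{\mathbf{u}}=y_1^{u_1}\cdots y_n^{u_n}$. $\langle F\rangle$ is the smallest well-mixed $\sigma$-ideal containing $F$ (a $\sigma$-ideal $I$ is well-mixed if $ab\in I\Rightarrow a\sigma(b)\in I$). Partial order $\preceq$: for $f=\sum_{i}f_ix^i,g=\sum_ig_ix^i\in\mathbb{N}[x]$ (coefficients padded by zeros up to a common index $K$), $f\preceq g$ iff $\sum_{j=i}^Kf_j\le\sum_{j=i}^Kg_j$ for all $i=0,\ldots,K$; for vectors, $\mathbf{u}\preceq\mathbf{v}$ iff $u_i\preceq v_i$ for all $i$. *)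

theory Defs
  imports "HOL-Library.Poly_Mapping" "HOL-Computational_Algebra.Polynomial"
begin

text \<open>Difference field: a field with a ring endomorphism sigma.\<close>
definition ring_endo :: "('a::field \<Rightarrow> 'a) \<Rightarrow> bool" where
  "ring_endo \<sigma> \<longleftrightarrow> (\<forall>a b. \<sigma> (a + b) = \<sigma> a + \<sigma> b) \<and> (\<forall>a b. \<sigma> (a * b) = \<sigma> a * \<sigma> b) \<and> \<sigma> 1 = 1"

text \<open>The difference polynomial ring k{y_1..y_n}: ordinary polynomial ring over k
  in the variables sigma^j(y_i), indexed by pairs (i, j) with i in the finite type 'n.\<close>
type_synonym ('n, 'a) dpoly = "(('n \<times> nat) \<Rightarrow>\<^sub>0 nat) \<Rightarrow>\<^sub>0 'a"

definition dvar :: "'n \<Rightarrow> nat \<Rightarrow> ('n, 'a::comm_ring_1) dpoly" where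
  "dvar i j = Poly_Mapping.single (Poly_Mapping.single (i, j) 1) 1"

definition yvar :: "'n \<Rightarrow> ('n, 'a::comm_ring_1) dpoly" where
  "yvar i = dvar i 0"

definition shift_mono :: "(('n \<times> nat) \<Rightarrow>\<^sub>0 nat) \<Rightarrow> (('n \<times> nat) \<Rightarrow>\<^sub>0 nat)" where
  "shift_mono m = (\<Sum>v\<in>Poly_Mapping.keys m. Poly_Mapping.single (fst v, Suc (snd v)) (Poly_Mapping.lookup m v))"

definition sigmaR :: "('a::field \<Rightarrow> 'a) \<Rightarrow> ('n, 'a) dpoly \<Rightarrow> ('n, 'a) dpoly" where
  "sigmaR \<sigma> p = (\<Sum>m\<in>Poly_Mapping.keys p. Poly_Mapping.single (shift_mono m) (\<sigma> (Poly_Mapping.lookup p m)))"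

definition dpow :: "('a::field \<Rightarrow> 'a) \<Rightarrow> ('n, 'a) dpoly \<Rightarrow> nat poly \<Rightarrow> ('n, 'a) dpoly" where
  "dpow \<sigma> a p = (\<Prod>i\<in>{..Polynomial.degree p}. ((sigmaR \<sigma> ^^ i) a) ^ coeff p i)"

definition ymono :: "('a::field \<Rightarrow> 'a) \<Rightarrow> ('n::finite \<Rightarrow> nat poly) \<Rightarrow> ('n, 'a) dpoly" where
  "ymono \<sigma> u = (\<Prod>i\<in>UNIV. dpow \<sigma> (yvar i) (u i))"

definition is_ideal :: "'b::comm_ring_1 set \<Rightarrow> bool" where
  "is_ideal I \<longleftrightarrow> 0 \<in> I \<and> (\<forall>a\<in>I. \<forall>b\<in>I. a + b \<in> I) \<and> (\<forall>r. \<forall>a\<in>I. r * a \<in> I)"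

definition sigma_ideal :: "('a::field \<Rightarrow> 'a) \<Rightarrow> ('n, 'a) dpoly set \<Rightarrow> bool" where
  "sigma_ideal \<sigma> I \<longleftrightarrow> is_ideal I \<and> (\<forall>a\<in>I. sigmaR \<sigma> a \<in> I)"

definition well_mixed :: "('a::field \<Rightarrow> 'a) \<Rightarrow> ('n, 'a) dpoly set \<Rightarrow> bool" where
  "well_mixed \<sigma> I \<longleftrightarrow> sigma_ideal \<sigma> I \<and> (\<forall>a b. a * b \<in> I \<longrightarrow> a * sigmaR \<sigma> b \<in> I)"

definition wm_closure :: "('a::field \<Rightarrow> 'a) \<Rightarrow> ('n, 'a) dpoly set \<Rightarrow> ('n, 'a) dpoly set" where
  "wm_closure \<sigma> F = \<Inter>{I. well_mixed \<sigma> I \<and> F \<subseteq> I}"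

definition npoly_le :: "nat poly \<Rightarrow> nat poly \<Rightarrow> bool" where
  "npoly_le f g \<longleftrightarrow> (let K = max (Polynomial.degree f) (Polynomial.degree g) in
     \<forall>i\<in>{0..K}. (\<Sum>j\<in>{i..K}. coeff f j) \<le> (\<Sum>j\<in>{i..K}. coeff g j))"

definition nvec_le :: "('n \<Rightarrow> nat poly) \<Rightarrow> ('n \<Rightarrow> nat poly) \<Rightarrow> bool" where
  "nvec_le u v \<longleftrightarrow> (\<forall>i. npoly_le (u i) (v i))"

end

theory Submission
  imports Defs
begin

text \<open>Both \<open>y\<^sup>u\<close> and \<open>y\<^sup>v\<close> are monomials. For a well-mixed \<open>\<sigma>\<close>-ideal \<open>I\<close>, the set of
  exponents of monomials in \<open>I\<close> is closed upwards (as \<open>I\<close> is an ideal) and under replacing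
  a factor \<open>w\<close> of the monomial by \<open>\<sigma>(w)\<close> (well-mixedness: \<open>ab \<in> I \<Longrightarrow> a\<sigma>(b) \<in> I\<close>), i.e. under
  moving exponent mass from order \<open>p\<close> to order \<open>p+1\<close>. Starting from the exponent of \<open>y\<^sup>u\<close>
  and sweeping the orders upwards, the excess over \<open>v\<close> at order \<open>p\<close> is carried to order
  \<open>p+1\<close>; the tail-sum inequalities of \<open>u \<preceq> v\<close> are preserved, and at the end the exponent is
  bounded by that of \<open>y\<^sup>v\<close> coefficientwise.\<close>

abbreviation monomial :: "('n \<times> nat \<Rightarrow>\<^sub>0 nat) \<Rightarrow> ('n, 'a::field) dpoly" where
  "monomial m \<equiv> Poly_Mapping.single m 1"

lemma lookup_shift_mono:
  "Poly_Mapping.lookup (shift_mono w) (l, k) = (case k of 0 \<Rightarrow> 0 | Suc j \<Rightarrow> Poly_Mapping.lookup w (l, j))"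
proof -
  have "Poly_Mapping.lookup (shift_mono w) (l, k) =
      (\<Sum>v\<in>Poly_Mapping.keys w. if k = Suc (snd v) \<and> v = (l, snd v) then Poly_Mapping.lookup w v else 0)"
    unfolding shift_mono_def lookup_sum lookup_single
    by (intro sum.cong) (auto simp: when_def)
  also have "\<dots> = (case k of 0 \<Rightarrow> 0 | Suc j \<Rightarrow> Poly_Mapping.lookup w (l, j))"
  proof (cases k)
    case (Suc j)
    have "(\<Sum>v\<in>Poly_Mapping.keys w. if k = Suc (snd v) \<and> v = (l, snd v) then Poly_Mapping.lookup w v else 0)
        = (\<Sum>v\<in>Poly_Mapping.keys w. if v = (l, j) then Poly_Mapping.lookup w v else 0)"
      using Suc by (intro sum.cong) auto
    then show ?thesis using Suc by (simp add: sum.delta' in_keys_iff)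
  qed simp
  finally show ?thesis .
qed

lemma sigmaR_monomial:
  fixes \<sigma> :: "'a::field \<Rightarrow> 'a"
  assumes "\<sigma> 1 = 1"
  shows "sigmaR \<sigma> (monomial m :: ('n, 'a) dpoly) = monomial (shift_mono m)"
  using assms by (simp add: sigmaR_def)

lemma shift_mono_single: "shift_mono (Poly_Mapping.single (i, j) d) = Poly_Mapping.single (i, Suc j) d"
  by (simp add: shift_mono_def)

lemma sigmaR_iterate_yvar:
  fixes \<sigma> :: "'a::field \<Rightarrow> 'a"
  assumes "\<sigma> 1 = 1"
  shows "(sigmaR \<sigma> ^^ k) (yvar i :: ('n, 'a) dpoly) = dvar i k"
  by (induction k) (simp_all add: yvar_def dvar_def sigmaR_monomial[of \<sigma>, OF assms] shift_mono_single)

lemma dvar_power: "(dvar i k :: ('n, 'a::field) dpoly) ^ c = monomial (Poly_Mapping.single (i, k) c)"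
  by (induction c) (simp_all add: dvar_def mult_single single_add[symmetric] add.commute)

lemma prod_monomial: "(\<Prod>x\<in>A. (monomial (f x) :: ('n, 'a::field) dpoly)) = monomial (\<Sum>x\<in>A. f x)"
  by (induction A rule: infinite_finite_induct) (simp_all add: mult_single)

definition ymono_exponent :: "('n::finite \<Rightarrow> nat poly) \<Rightarrow> ('n \<times> nat \<Rightarrow>\<^sub>0 nat)" where
  "ymono_exponent u = (\<Sum>l\<in>UNIV. \<Sum>k\<le>degree (u l). Poly_Mapping.single (l, k) (coeff (u l) k))"

lemma ymono_eq_monomial:
  fixes \<sigma> :: "'a::field \<Rightarrow> 'a"
  assumes "\<sigma> 1 = 1"
  shows "ymono \<sigma> u = monomial (ymono_exponent u)"
  by (simp add: ymono_def dpow_def ymono_exponent_def sigmaR_iterate_yvar[of \<sigma>, OF assms] dvar_power prod_monomial)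

lemma lookup_ymono_exponent: "Poly_Mapping.lookup (ymono_exponent u) (l, k) = coeff (u l) k"
proof -
  have "Poly_Mapping.lookup (ymono_exponent u) (l, k) =
      (\<Sum>l'\<in>UNIV. if l' = l then (\<Sum>k'\<le>degree (u l). if k' = k then coeff (u l) k' else 0) else 0)"
    unfolding ymono_exponent_def lookup_sum lookup_single
    by (intro sum.cong) (auto simp: when_def)
  also have "\<dots> = coeff (u l) k"
    by (simp add: coeff_eq_0)
  finally show ?thesis .
qed

definition tail_sum :: "nat \<Rightarrow> ('n \<times> nat \<Rightarrow>\<^sub>0 nat) \<Rightarrow> 'n \<Rightarrow> nat \<Rightarrow> nat" where
  "tail_sum N m l i = (\<Sum>j\<in>{i..<N}. Poly_Mapping.lookup m (l, j))"

lemma tail_sum_Suc: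
  "i < N \<Longrightarrow> tail_sum N m l i = Poly_Mapping.lookup m (l, i) + tail_sum N m l (Suc i)"
  unfolding tail_sum_def by (simp add: sum.atLeast_Suc_lessThan)

lemma tail_sum_cong:
  "(\<And>j. i \<le> j \<Longrightarrow> Poly_Mapping.lookup m (l, j) = Poly_Mapping.lookup m' (l, j)) \<Longrightarrow>
    tail_sum N m l i = tail_sum N m' l i"
  unfolding tail_sum_def by (intro sum.cong) auto

lemma carry_column:
  fixes S :: "('n::finite \<times> nat \<Rightarrow>\<^sub>0 nat) set"
  assumes shift: "\<And>m w. m + w \<in> S \<Longrightarrow> m + shift_mono w \<in> S"
    and "a \<in> S" and "p < N"
    and zero: "\<And>l k. N \<le> k \<Longrightarrow> Poly_Mapping.lookup a (l, k) = 0"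
    and tail: "\<And>l. tail_sum N a l p \<le> tail_sum N b l p"
    and tail_next: "\<And>l. tail_sum N a l (Suc p) \<le> tail_sum N b l (Suc p)"
  obtains a' where "a' \<in> S"
    and "\<And>l k. k \<noteq> p \<Longrightarrow> k \<noteq> Suc p \<Longrightarrow> Poly_Mapping.lookup a' (l, k) = Poly_Mapping.lookup a (l, k)"
    and "\<And>l. Poly_Mapping.lookup a' (l, p) \<le> Poly_Mapping.lookup b (l, p)"
    and "\<And>l k. N \<le> k \<Longrightarrow> Poly_Mapping.lookup a' (l, k) = 0"
    and "\<And>l. tail_sum N a' l (Suc p) \<le> tail_sum N b l (Suc p)"
proof
  define e where "e l = Poly_Mapping.lookup a (l, p) - Poly_Mapping.lookup b (l, p)" for l
  \<comment> \<open>\<open>w\<close> is the excess of \<open>a\<close> over \<open>b\<close> at order \<open>p\<close>; it is moved to order \<open>Suc p\<close>.\<close>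
  define w where "w = (\<Sum>l\<in>UNIV. Poly_Mapping.single (l, p) (e l))"
  have lookup_w: "Poly_Mapping.lookup w (l, k) = (if k = p then e l else 0)" for l k
    unfolding w_def lookup_sum lookup_single by (simp add: when_def)
  have "a = (a - w) + w"
    by (rule poly_mapping_eqI) (auto simp: lookup_add lookup_minus lookup_w e_def)
  then show "(a - w) + shift_mono w \<in> S"
    using shift \<open>a \<in> S\<close> by metis
  have lookup_a': "Poly_Mapping.lookup ((a - w) + shift_mono w) (l, k) =
      Poly_Mapping.lookup a (l, k) - (if k = p then e l else 0) + (if k = Suc p then e l else 0)" for l k
    by (cases k) (auto simp: lookup_add lookup_minus lookup_w lookup_shift_mono)
  have tail_a: "tail_sum N a l p = Poly_Mapping.lookup a (l, p) + tail_sum N a l (Suc p)"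
    and tail_b: "tail_sum N b l p = Poly_Mapping.lookup b (l, p) + tail_sum N b l (Suc p)" for l
    using \<open>p < N\<close> by (simp_all add: tail_sum_Suc)
  have last_column: "e l = 0" if "Suc p = N" for l
    using tail[of l] tail_a[of l] tail_b[of l] that by (simp add: e_def tail_sum_def)
  show "Poly_Mapping.lookup ((a - w) + shift_mono w) (l, k) = Poly_Mapping.lookup a (l, k)"
    if "k \<noteq> p" "k \<noteq> Suc p" for l k
    using that by (simp add: lookup_a')
  show "Poly_Mapping.lookup ((a - w) + shift_mono w) (l, p) \<le> Poly_Mapping.lookup b (l, p)" for l
    by (simp add: lookup_a' e_def)
  show "Poly_Mapping.lookup ((a - w) + shift_mono w) (l, k) = 0" if "N \<le> k" for l k
    using that \<open>p < N\<close> last_column[of l] by (auto simp: lookup_a' zero)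
  show "tail_sum N ((a - w) + shift_mono w) l (Suc p) \<le> tail_sum N b l (Suc p)" for l
  proof (cases "Suc p < N")
    case True
    have "tail_sum N ((a - w) + shift_mono w) l (Suc p) = e l + tail_sum N a l (Suc p)"
      using tail_sum_Suc[OF True, of "(a - w) + shift_mono w" l] tail_sum_Suc[OF True, of a l]
        tail_sum_cong[of "Suc (Suc p)" "(a - w) + shift_mono w" l a N]
      by (simp add: lookup_a')
    then show ?thesis
      using tail[of l] tail_next[of l] tail_a[of l] tail_b[of l] by (simp add: e_def)
  qed (simp add: tail_sum_def)
qed

lemma tail_dominated_sweep:
  fixes S :: "('n::finite \<times> nat \<Rightarrow>\<^sub>0 nat) set"
  assumes mult: "\<And>m r. m \<in> S \<Longrightarrow> m + r \<in> S"
    and shift: "\<And>m w. m + w \<in> S \<Longrightarrow> m + shift_mono w \<in> S"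
    and "a \<in> S"
    and "\<And>l k. k < p \<Longrightarrow> Poly_Mapping.lookup a (l, k) \<le> Poly_Mapping.lookup b (l, k)"
    and "\<And>l k. N \<le> k \<Longrightarrow> Poly_Mapping.lookup a (l, k) = 0"
    and "\<And>l i. p \<le> i \<Longrightarrow> tail_sum N a l i \<le> tail_sum N b l i"
  shows "b \<in> S"
  using assms(3-)
proof (induction "N - p" arbitrary: a p)
  case 0
  have "Poly_Mapping.lookup a x \<le> Poly_Mapping.lookup b x" for x
    using 0 by (cases x) (metis diff_is_0_eq le_trans not_le zero_le)
  then have "b = a + (b - a)"
    by (intro poly_mapping_eqI) (simp add: lookup_add lookup_minus)
  then show ?case
    using mult \<open>a \<in> S\<close> by metis
next
  case (Suc q)
  then have "p < N" by simp
  obtain a' where "a' \<in> S"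
    and unchanged: "\<And>l k. k \<noteq> p \<Longrightarrow> k \<noteq> Suc p \<Longrightarrow> Poly_Mapping.lookup a' (l, k) = Poly_Mapping.lookup a (l, k)"
    and below_p: "\<And>l. Poly_Mapping.lookup a' (l, p) \<le> Poly_Mapping.lookup b (l, p)"
    and zero: "\<And>l k. N \<le> k \<Longrightarrow> Poly_Mapping.lookup a' (l, k) = 0"
    and tail_Suc_p: "\<And>l. tail_sum N a' l (Suc p) \<le> tail_sum N b l (Suc p)"
    using carry_column[OF shift \<open>a \<in> S\<close> \<open>p < N\<close>] Suc.prems by (metis le_refl le_SucI)
  have "tail_sum N a' l i \<le> tail_sum N b l i" if "Suc p \<le> i" for l i
  proof (cases "i = Suc p")
    case False
    then show ?thesis
      using tail_sum_cong[of i a' l a N] unchanged that Suc.prems(4)[of i l] by simp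
  qed (simp add: tail_Suc_p)
  moreover have "Poly_Mapping.lookup a' (l, k) \<le> Poly_Mapping.lookup b (l, k)" if "k < Suc p" for l k
    using that unchanged Suc.prems(2) below_p by (cases "k = p") auto
  moreover have "q = N - Suc p" using Suc.hyps(2) by simp
  ultimately show ?case
    using Suc.hyps(1) \<open>a' \<in> S\<close> zero by blast
qed

lemma well_mixed_monomial_mult:
  assumes "well_mixed \<sigma> I" and "(monomial m :: ('n, 'a::field) dpoly) \<in> I"
  shows "monomial (m + r) \<in> I"
proof -
  have "monomial r * monomial m \<in> I"
    using assms by (simp add: well_mixed_def sigma_ideal_def is_ideal_def)
  then show ?thesis by (simp add: mult_single add.commute)
qed

lemma well_mixed_monomial_shift:
  fixes \<sigma> :: "'a::field \<Rightarrow> 'a"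
  assumes "\<sigma> 1 = 1" and "well_mixed \<sigma> I" and "(monomial (m + w) :: ('n, 'a) dpoly) \<in> I"
  shows "monomial (m + shift_mono w) \<in> I"
proof -
  have "monomial m * monomial w \<in> I"
    using assms(3) by (simp add: mult_single)
  then have "monomial m * sigmaR \<sigma> (monomial w) \<in> I"
    using assms(2) by (simp add: well_mixed_def)
  then show ?thesis by (simp add: sigmaR_monomial[of \<sigma>, OF assms(1)] mult_single)
qed

lemma npoly_le_tail_sum:
  fixes u v :: "'n::finite \<Rightarrow> nat poly"
  assumes "npoly_le (u l) (v l)" and "degree (u l) < N" and "degree (v l) < N"
  shows "tail_sum N (ymono_exponent u) l i \<le> tail_sum N (ymono_exponent v) l i"
proof -
  define K where "K = max (degree (u l)) (degree (v l))"
  have tail_eq: "tail_sum N (ymono_exponent w) l i = (\<Sum>j\<in>{i..K}. coeff (w l) j)"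
    if "degree (w l) \<le> K" for w :: "'n \<Rightarrow> nat poly"
    unfolding tail_sum_def lookup_ymono_exponent
    by (rule sum.mono_neutral_right) (use assms that in \<open>auto simp: K_def coeff_eq_0\<close>)
  have "(\<Sum>j\<in>{i..K}. coeff (u l) j) \<le> (\<Sum>j\<in>{i..K}. coeff (v l) j)"
    using assms(1) by (cases "i \<le> K") (auto simp: npoly_le_def Let_def K_def)
  then show ?thesis by (simp add: tail_eq K_def)
qed

theorem lemma4p4:
  fixes \<sigma> :: "'a::field_char_0 \<Rightarrow> 'a"
    and u v :: "'n::finite \<Rightarrow> nat poly"
  assumes "ring_endo \<sigma>"
    and "nvec_le u v"
  shows "ymono \<sigma> v \<in> wm_closure \<sigma> {ymono \<sigma> u}"
  unfolding wm_closure_def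
proof (rule InterI)
  fix I assume "I \<in> {I. well_mixed \<sigma> I \<and> {ymono \<sigma> u} \<subseteq> I}"
  then have wm: "well_mixed \<sigma> I" and "ymono \<sigma> u \<in> I" by auto
  have \<sigma>1: "\<sigma> 1 = 1" using assms(1) by (simp add: ring_endo_def)
  define N where "N = Suc (\<Sum>l\<in>UNIV. degree (u l) + degree (v l))"
  have deg: "degree (u l) < N" "degree (v l) < N" for l
    using member_le_sum[of l UNIV "\<lambda>l. degree (u l) + degree (v l)"] by (auto simp: N_def)
  have "monomial (ymono_exponent v) \<in> I"
  proof (rule tail_dominated_sweep[where S = "{m. monomial m \<in> I}" and p = 0 and N = N, simplified])
    show "\<And>m r. monomial m \<in> I \<Longrightarrow> monomial (m + r) \<in> I"
      by (rule well_mixed_monomial_mult[OF wm])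
    show "\<And>m w. monomial (m + w) \<in> I \<Longrightarrow> monomial (m + shift_mono w) \<in> I"
      by (rule well_mixed_monomial_shift[OF \<sigma>1 wm])
    show "monomial (ymono_exponent u) \<in> I"
      using \<open>ymono \<sigma> u \<in> I\<close> by (simp add: ymono_eq_monomial[of \<sigma>, OF \<sigma>1])
    show "Poly_Mapping.lookup (ymono_exponent u) (l, k) = 0" if "N \<le> k" for l k
      using deg(1)[of l] that by (simp add: lookup_ymono_exponent coeff_eq_0)
    show "tail_sum N (ymono_exponent u) l i \<le> tail_sum N (ymono_exponent v) l i" for l i
      using npoly_le_tail_sum assms(2) deg unfolding nvec_le_def by blast
  qed
  then show "ymono \<sigma> v \<in> I" by (simp add: ymono_eq_monomial[of \<sigma>, OF \<sigma>1])
qed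

end
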